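(* Let $d\ge2$ and $R,S\subset\mathbb{Z}_d$. Then $\mathrm{ZMF}^{\mathrm{gr}}_{\mathrm{bi}}(\hat P_R,\hat P_S)=\mathbb{C}\,1$ if $R=S$, and $\mathrm{ZMF}^{\mathrm{gr}}_{\mathrm{bi}}(\hat P_R,\hat P_S)=0$ otherwise.
   Context: Let $\eta=e^{2\pi i/d}$. Graded matrix bifactorisations of $x^d$: $\mathbb{Z}_2$-graded free $\mathbb{C}[x,y]$-modules $M$ with a $\mathbb{C}$-grading compatible with the module structure, where $x,y$ have $\mathbb{C}$-degree $2/d$, and an odd $\mathbb{C}[x,y]$-linear $d^M$ of $\mathbb{C}$-degree $1$ with $d^M\circ d^M=(x^d-y^d)1_M$. $\mathrm{ZMF}^{\mathrm{gr}}_{\mathrm{bi}}(M,N)$ is the space of even $\mathbb{C}[x,y]$-linear maps $f:M\to N$ of $\mathbb{C}$-degree $0$ with $d^Nf=fd^M$. For $S\subset\mathbb{Z}_d$ and $\alpha\in\mathbb{C}$, $P_S\{\alpha\}$ has even part $\mathbb{C}[x,y]$ with $1$ in degree $\alpha$, odd part $\mathbb{C}[x,y]$ with $1$ in degree $\alpha+\frac2d|S|-1$, $d_1=\prod_{j\in S}(x-\eta^jy)$ (odd to even), $d_0=\prod_{j\notin S}(x-\eta^jy)$ (even to odd). $\hat P_S:=P_S\{\frac{1-|S|}{d}\}$. *)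

theory Defs
  imports Complex_Main "HOL-Computational_Algebra.Polynomial"
begin

text \<open>C[x,y] is modelled as complex poly poly: an element p is
  sum over j of (coeff p j)(x) * y^j.  So x = [:[:0,1:]:], y = [:0,1:].\<close>

definition xP :: "complex poly poly" where "xP = [:[:0, 1:]:]"
definition yP :: "complex poly poly" where "yP = [:0, 1:]"
definition cP :: "complex \<Rightarrow> complex poly poly" where "cP c = [:[:c:]:]"

definition eta :: "nat \<Rightarrow> complex" where "eta d = cis (2 * pi / real d)"

definition lin :: "nat \<Rightarrow> nat \<Rightarrow> complex poly poly" where
  "lin d j = xP - cP (eta d ^ j) * yP"

text \<open>p is homogeneous of C-degree c, where x and y have C-degree 2/d
  (the zero polynomial is homogeneous of every degree).\<close>
definition homog :: "nat \<Rightarrow> complex poly poly \<Rightarrow> complex \<Rightarrow> bool" where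
  "homog d p c \<longleftrightarrow> (\<forall>i j. coeff (coeff p j) i \<noteq> 0 \<longrightarrow> 2 * of_nat (i + j) / of_nat d = c)"

text \<open>Graded matrix bifactorisation with even and odd part both free of rank one:
  generator degrees deg0 (even), deg1 (odd), differential d1 (odd to even), d0 (even to odd).\<close>
record rk1mf =
  deg0 :: complex
  deg1 :: complex
  dd1 :: "complex poly poly"
  dd0 :: "complex poly poly"

definition P :: "nat \<Rightarrow> nat set \<Rightarrow> complex \<Rightarrow> rk1mf" where
  "P d S \<alpha> = \<lparr> deg0 = \<alpha>, deg1 = \<alpha> + 2 / of_nat d * of_nat (card S) - 1,
     dd1 = (\<Prod>j\<in>S. lin d j), dd0 = (\<Prod>j\<in>{..<d} - S. lin d j) \<rparr>"

definition Phat :: "nat \<Rightarrow> nat set \<Rightarrow> rk1mf" where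
  "Phat d S = P d S ((1 - of_nat (card S)) / of_nat d)"

text \<open>Even C[x,y]-linear maps M \<rightarrow> N between rank (1|1) free modules are pairs (f0,f1)
  (multiplication on the even / odd generator); C-degree 0 and commutation with
  the differentials.\<close>
definition ZMF :: "nat \<Rightarrow> rk1mf \<Rightarrow> rk1mf \<Rightarrow> (complex poly poly \<times> complex poly poly) set" where
  "ZMF d M N = {(f0, f1). homog d f0 (deg0 M - deg0 N) \<and> homog d f1 (deg1 M - deg1 N)
      \<and> dd0 N * f0 = f1 * dd0 M \<and> dd1 N * f1 = f0 * dd1 M}"

end

theory Submission
  imports Defs
begin

text \<open>The differentials of \<open>Phat d R\<close> and \<open>Phat d S\<close> are nonzero, so a closed morphism
  \<open>(f0, f1)\<close> has both components zero or both nonzero. The degree shifts of the two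
  components are opposite, while a nonzero homogeneous polynomial has nonnegative degree;
  hence both are constants, and evaluating at \<open>(x, y) = (1, 0)\<close>, where every linear factor
  is \<open>1\<close>, shows that the constants agree. A nonzero constant then forces
  \<open>\<Prod>j\<in>R. lin d j = \<Prod>j\<in>S. lin d j\<close>, and evaluating at \<open>(\<eta>^j, 1)\<close> recovers the
  index sets from these products, since the powers \<open>\<eta>^j\<close>, \<open>j < d\<close>, are distinct.\<close>

definition poly2 :: "complex poly poly \<Rightarrow> complex \<Rightarrow> complex \<Rightarrow> complex" where
  "poly2 p x y = poly (poly p [:y:]) x"

lemma poly2_0 [simp]: "poly2 0 x y = 0"
  by (simp add: poly2_def)

lemma poly2_mult [simp]: "poly2 (p * q) x y = poly2 p x y * poly2 q x y"
  by (simp add: poly2_def)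

lemma poly2_prod [simp]: "poly2 (prod f A) x y = (\<Prod>a\<in>A. poly2 (f a) x y)"
  by (simp add: poly2_def poly_prod)

lemma poly2_cP [simp]: "poly2 (cP c) x y = c"
  by (simp add: poly2_def cP_def)

lemma poly2_lin [simp]: "poly2 (lin d j) x y = x - eta d ^ j * y"
  by (simp add: poly2_def lin_def xP_def yP_def cP_def)

lemma cP_eq_0_iff [simp]: "cP c = 0 \<longleftrightarrow> c = 0"
  by (simp add: cP_def)

lemma prod_lin_nonzero: "(\<Prod>j\<in>A. lin d j) \<noteq> 0"
proof
  assume "(\<Prod>j\<in>A. lin d j) = 0"
  then have "poly2 (\<Prod>j\<in>A. lin d j) 1 0 = 0" by simp
  then show False by simp
qed

lemma eta_power: "eta d ^ k = cis (2 * pi * real k / real d)"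
  by (simp add: eta_def DeMoivre mult.commute)

lemma inj_on_eta_power: "0 < d \<Longrightarrow> inj_on (\<lambda>k. eta d ^ k) {..<d}"
  using bij_betw_roots_unity by (simp add: eta_power bij_betw_def)

lemma prod_lin_subset:
  assumes "0 < d" "A \<subseteq> {..<d}" "B \<subseteq> {..<d}"
    and eq: "(\<Prod>j\<in>A. lin d j) = (\<Prod>j\<in>B. lin d j)"
  shows "A \<subseteq> B"
proof
  fix j assume "j \<in> A"
  have fin: "finite A" "finite B"
    using assms(2,3) finite_subset by auto
  have "poly2 (\<Prod>k\<in>B. lin d k) (eta d ^ j) 1 = poly2 (\<Prod>k\<in>A. lin d k) (eta d ^ j) 1"
    by (simp only: eq)
  also have "\<dots> = 0"
    using \<open>j \<in> A\<close> fin by simp blast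
  finally obtain k where "k \<in> B" "eta d ^ j = eta d ^ k"
    using fin by auto
  with inj_on_eta_power[OF \<open>0 < d\<close>] \<open>j \<in> A\<close> assms(2,3) have "j = k"
    by (auto dest: inj_onD)
  with \<open>k \<in> B\<close> show "j \<in> B" by simp
qed

lemma prod_lin_eq_iff:
  assumes "0 < d" "A \<subseteq> {..<d}" "B \<subseteq> {..<d}"
  shows "(\<Prod>j\<in>A. lin d j) = (\<Prod>j\<in>B. lin d j) \<longleftrightarrow> A = B"
  using prod_lin_subset[OF assms] prod_lin_subset[OF assms(1,3,2)] by auto

lemma homog_0: "homog d 0 c"
  by (simp add: homog_def)

lemma homog_cP: "homog d (cP c) 0"
  by (simp add: homog_def cP_def coeff_pCons split: nat.split)

lemma homog_nonzero_degree:
  assumes "homog d p c" "p \<noteq> 0"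
  obtains n :: nat where "c = 2 * of_nat n / of_nat d"
proof -
  obtain j where "coeff p j \<noteq> 0"
    using assms(2) by (metis leading_coeff_0_iff)
  then obtain i where "coeff (coeff p j) i \<noteq> 0"
    by (metis leading_coeff_0_iff)
  then show ?thesis
    using assms(1) that unfolding homog_def by metis
qed

lemma grading_eq_0_iff:
  "0 < d \<Longrightarrow> (2 * of_nat n / of_nat d :: complex) = 0 \<longleftrightarrow> n = 0"
  by simp

lemma homog_opposite_degrees:
  assumes "0 < d" "homog d p c" "homog d q (- c)" "p \<noteq> 0" "q \<noteq> 0"
  shows "c = 0"
proof -
  obtain m n :: nat where m: "c = 2 * of_nat m / of_nat d" and n: "- c = 2 * of_nat n / of_nat d"
    using assms(2-5) homog_nonzero_degree by metis
  have "2 * of_nat m / of_nat d + 2 * of_nat n / of_nat d = (0 :: complex)"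
    using m n by (metis add.right_inverse)
  then have "2 * of_nat (m + n) / of_nat d = (0 :: complex)"
    by (simp only: of_nat_add distrib_left add_divide_distrib)
  then have "m + n = 0"
    by (simp only: grading_eq_0_iff[OF \<open>0 < d\<close>])
  then show ?thesis
    using m by simp
qed

lemma homog_degree_0_eq_cP:
  assumes "homog d p 0" "0 < d"
  shows "p = cP (coeff (coeff p 0) 0)"
proof -
  have vanish: "coeff (coeff p j) i = 0" if "0 < i + j" for i j
  proof (rule ccontr)
    assume "coeff (coeff p j) i \<noteq> 0"
    then have "2 * of_nat (i + j) / of_nat d = (0 :: complex)"
      using assms(1) unfolding homog_def by blast
    then have "i + j = 0"
      by (simp only: grading_eq_0_iff[OF assms(2)])
    with that show False by simp
  qed
  show ?thesis
  proof (intro poly_eqI)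
    fix i j
    show "coeff (coeff p j) i = coeff (coeff (cP (coeff (coeff p 0) 0)) j) i"
      using vanish[of i j] by (cases i; cases j) (auto simp: cP_def)
  qed
qed

lemma Phat_degree_shifts:
  "deg1 (Phat d R) - deg1 (Phat d S) = - (deg0 (Phat d R) - deg0 (Phat d S))"
  by (simp add: Phat_def P_def diff_divide_distrib add_divide_distrib)

lemma ZMF_Phat_scalar:
  assumes "0 < d" "(f0, f1) \<in> ZMF d (Phat d R) (Phat d S)"
  obtains c where "f0 = cP c" "f1 = cP c"
proof -
  let ?\<delta> = "deg0 (Phat d R) - deg0 (Phat d S)"
  have hom0: "homog d f0 ?\<delta>"
    and "homog d f1 (deg1 (Phat d R) - deg1 (Phat d S))"
    and "dd0 (Phat d S) * f0 = f1 * dd0 (Phat d R)"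
    and "dd1 (Phat d S) * f1 = f0 * dd1 (Phat d R)"
    using assms(2) unfolding ZMF_def by auto
  then have hom1: "homog d f1 (- ?\<delta>)"
    and comm0: "(\<Prod>j\<in>{..<d} - S. lin d j) * f0 = f1 * (\<Prod>j\<in>{..<d} - R. lin d j)"
    and comm1: "(\<Prod>j\<in>S. lin d j) * f1 = f0 * (\<Prod>j\<in>R. lin d j)"
    by (simp_all only: Phat_degree_shifts) (simp_all add: Phat_def P_def)
  show thesis
  proof (cases "f0 = 0")
    case True
    then have "f1 = 0"
      using comm0 prod_lin_nonzero by simp
    with True show thesis
      using that[of 0] by simp
  next
    case False
    then have "f1 \<noteq> 0"
      using comm1 prod_lin_nonzero by auto
    then have "?\<delta> = 0"
      using homog_opposite_degrees[OF \<open>0 < d\<close> hom0 hom1] False by simp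
    then have "homog d f0 0" "homog d f1 0"
      using hom0 hom1 by simp_all
    define a b where "a = coeff (coeff f0 0) 0" and "b = coeff (coeff f1 0) 0"
    have f0: "f0 = cP a" and f1: "f1 = cP b"
      unfolding a_def b_def using \<open>homog d f0 0\<close> \<open>homog d f1 0\<close> homog_degree_0_eq_cP \<open>0 < d\<close>
      by blast+
    have "b = a"
      using arg_cong[where f = "\<lambda>p. poly2 p 1 0", OF comm1] by (simp add: f0 f1)
    then show thesis
      using that f0 f1 by simp
  qed
qed

theorem lemma3p12:
  fixes d :: nat and R S :: "nat set"
  assumes "d \<ge> 2" and "R \<subseteq> {..<d}" and "S \<subseteq> {..<d}"
  shows "ZMF d (Phat d R) (Phat d S) =
           (if R = S then {(cP c, cP c) | c. True} else {(0, 0)})"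
proof (intro equalityI subsetI)
  have "0 < d" using assms(1) by simp
  fix f assume f_ZMF: "f \<in> ZMF d (Phat d R) (Phat d S)"
  then obtain c where f: "f = (cP c, cP c)"
    using ZMF_Phat_scalar[OF \<open>0 < d\<close>] by (cases f) blast
  have "c = 0" if "R \<noteq> S"
  proof (rule ccontr)
    assume "c \<noteq> 0"
    have "cP c * (\<Prod>j\<in>S. lin d j) = cP c * (\<Prod>j\<in>R. lin d j)"
      using f_ZMF by (simp add: f ZMF_def Phat_def P_def mult.commute)
    with \<open>c \<noteq> 0\<close> have "(\<Prod>j\<in>S. lin d j) = (\<Prod>j\<in>R. lin d j)"
      by simp
    with \<open>R \<noteq> S\<close> show False
      using prod_lin_eq_iff[OF \<open>0 < d\<close> assms(3,2)] by simp
  qed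
  then show "f \<in> (if R = S then {(cP c, cP c) | c. True} else {(0, 0)})"
    by (auto simp: f)
next
  fix f assume "f \<in> (if R = S then {(cP c, cP c) | c. True} else {(0, 0)})"
  then show "f \<in> ZMF d (Phat d R) (Phat d S)"
    by (cases "R = S") (auto simp: ZMF_def homog_0 homog_cP mult.commute)
qed

end
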